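(* Let $\varphi$ be a basic existential or basic universal sentence of spread $m$ and range $r'$ over a graph language $L$, and let $C,M\notin L$ be distinct unary predicate symbols. Let $G$ be an $L$-interpretation with $G\models\varphi$, and let $\lambda$ be a layering of $\overline G$. Let $r\ge r'$ and $\ell>2r(3m+1)$ be integers. Then for all but at most $6rm$ of the $(\ell,r)$-covers of integers $R$, there exists an $m$-plan $p$ for $R$ such that for each $I\in R$, $$G[\lambda^{-1}(I)],\ C:=\lambda^{-1}(M_{2r}(I)),\ M:=\lambda^{-1}(M_r(I))\models\varphi^{(p(I))}.$$
   Context: A graph language $L$ consists of a binary predicate symbol $e$ and a finite set of unary predicate symbols. An $L$-interpretation $G$ consists of a graph $\overline G$ and a set $S_C\subseteq V(\overline G)$ for each unary $C\in L$; $e$ is interpreted as adjacency in $\overline G$. For $S\subseteq V(\overline G)$, $G[S]$ is the interpretation on $\overline G[S]$ with each unary predicate restricted to $S$; "$H, C:=A, M:=B$" denotes the expansion of $H$ with new unary predicates $C,M$ interpreted as $A,B$. A layering of a graph is a function $\lambda:V\to\mathbb Z$ with $|\lambda(u)-\lambda(v)|\le1$ on edges. $d(x,y)\le r$ abbreviates $(\exists z_0,\dots,z_r)\,z_0=x\land z_r=y\land\bigwedge_{i=1}^r(z_{i-1}=z_i\lor e(z_{i-1},z_i))$. An $r$-local formula is a formula $\psi$ with one free variable $x$ in which all quantifications are of the form $(\exists y: d(x,y)\le r)$ or $(\forall y: d(x,y)\le r)$. A basic existential sentence is one of the form $(\exists x_1,\dots,x_m)\bigwedge_{1\le i<j\le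 m}d(x_i,x_j)>2r\land\bigwedge_{i=1}^m\psi(x_i)$, and a basic universal sentence is one of the form $(\forall x_1,\dots,x_{m+1})\bigl(\bigwedge_{1\le i<j\le m+1}d(x_i,x_j)>2r\bigr)\Rightarrow\bigvee_{i=1}^{m+1}\psi(x_i)$, where in both cases $\psi$ is $r$-local; $m$ is the spread, $r$ the range and $\psi$ the core. For such $\varphi$ and an integer $k\ge0$, the $(C,M,k)$-variant $\varphi^{(k)}$ is $(\exists x_1,\dots,x_k)\bigwedge_{1\le i<j\le k}d(x_i,x_j)>2r\land\bigwedge_{i=1}^k(C(x_i)\land\psi(x_i))$ if $\varphi$ is basic existential, and $(\forall x_1,\dots,x_{k+1})\bigl(\bigwedge_{i=1}^{k+1}M(x_i)\land\bigwedge_{1\le i<j\le k+1}d(x_i,x_j)>2r\bigr)\Rightarrow\bigvee_{i=1}^{k+1}\psi(x_i)$ if $\varphi$ is basic universal. For integers $\ell\ge 2r+1$ and $n$, the set of all intervals $\{i,i+1,\dots,i+\ell-1\}$ with $i\equiv n\pmod{\ell-2r}$ is an $(\ell,r)$-cover of integers (there are exactly $\ell-2r$ distinct ones). For an integer $d\ge0$ and $I=\{i,\dots,i+\ell-1\}$ in a cover, $M_d(I)=\{i+d,\dots,i+\ell-d-1\}$. An $m$-plan for a cover $R$ is a function $p:R\to\mathbb Z_{\ge0}$ with $\sum_{I\in R}p(I)=m$. *)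

theory Defs
  imports Main
begin

text \<open>A graph language L is a finite set of unary predicate symbols (of type 'p);
  the binary symbol e is implicit.\<close>

record ('v, 'p) interp =
  verts :: "'v set"
  adj   :: "'v \<Rightarrow> 'v \<Rightarrow> bool"
  un    :: "'p \<Rightarrow> 'v set"

definition is_graph :: "('v, 'p) interp \<Rightarrow> bool" where
  "is_graph G \<longleftrightarrow> finite (verts G) \<and>
     (\<forall>u v. adj G u v \<longrightarrow> u \<in> verts G \<and> v \<in> verts G) \<and>
     (\<forall>u v. adj G u v \<longrightarrow> adj G v u) \<and>
     (\<forall>u. \<not> adj G u u)"

definition L_interp :: "'p set \<Rightarrow> ('v, 'p) interp \<Rightarrow> bool" where
  "L_interp L G \<longleftrightarrow> is_graph G \<and> (\<forall>C\<in>L. un G C \<subseteq> verts G)"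

definition restrict :: "('v, 'p) interp \<Rightarrow> 'v set \<Rightarrow> ('v, 'p) interp" where
  "restrict G S = \<lparr> verts = verts G \<inter> S,
                    adj = (\<lambda>u v. adj G u v \<and> u \<in> S \<and> v \<in> S),
                    un = (\<lambda>P. un G P \<inter> S) \<rparr>"

definition expand :: "('v, 'p) interp \<Rightarrow> 'p \<Rightarrow> 'v set \<Rightarrow> 'p \<Rightarrow> 'v set \<Rightarrow> ('v, 'p) interp" where
  "expand H C A M B = H \<lparr> un := (un H)(C := A, M := B) \<rparr>"

definition layering :: "('v, 'p) interp \<Rightarrow> ('v \<Rightarrow> int) \<Rightarrow> bool" where
  "layering G lam \<longleftrightarrow> (\<forall>u v. adj G u v \<longrightarrow> \<bar>lam u - lam v\<bar> \<le> 1)"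

definition dist_le :: "('v, 'p) interp \<Rightarrow> nat \<Rightarrow> 'v \<Rightarrow> 'v \<Rightarrow> bool" where
  "dist_le H k u w \<longleftrightarrow> (\<exists>zs. length zs = Suc k \<and> set zs \<subseteq> verts H \<and>
      zs ! 0 = u \<and> zs ! k = w \<and>
      (\<forall>i<k. zs ! i = zs ! Suc i \<or> adj H (zs ! i) (zs ! Suc i)))"

text \<open>Variables are natural numbers; variable 0 is the free
  variable x. LExB y \<psi> stands for (\<exists>y: d(x,y) \<le> r) \<psi>, LAllB y \<psi> for (\<forall>y: d(x,y) \<le> r) \<psi>,
  where r is the range the formula is evaluated with.\<close>

datatype 'p lfm =
    LTrue
  | LEq nat nat
  | LAdj nat nat
  | LPred 'p nat
  | LNot "'p lfm"
  | LAnd "'p lfm" "'p lfm"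
  | LOr "'p lfm" "'p lfm"
  | LExB nat "'p lfm"
  | LAllB nat "'p lfm"

fun fv :: "'p lfm \<Rightarrow> nat set" where
  "fv LTrue = {}"
| "fv (LEq i j) = {i, j}"
| "fv (LAdj i j) = {i, j}"
| "fv (LPred P i) = {i}"
| "fv (LNot f) = fv f"
| "fv (LAnd f g) = fv f \<union> fv g"
| "fv (LOr f g) = fv f \<union> fv g"
| "fv (LExB y f) = fv f - {y}"
| "fv (LAllB y f) = fv f - {y}"

fun preds :: "'p lfm \<Rightarrow> 'p set" where
  "preds LTrue = {}"
| "preds (LEq i j) = {}"
| "preds (LAdj i j) = {}"
| "preds (LPred P i) = {P}"
| "preds (LNot f) = preds f"
| "preds (LAnd f g) = preds f \<union> preds g"
| "preds (LOr f g) = preds f \<union> preds g"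
| "preds (LExB y f) = preds f"
| "preds (LAllB y f) = preds f"

fun bound_ok :: "'p lfm \<Rightarrow> bool" where
  "bound_ok (LNot f) = bound_ok f"
| "bound_ok (LAnd f g) = (bound_ok f \<and> bound_ok g)"
| "bound_ok (LOr f g) = (bound_ok f \<and> bound_ok g)"
| "bound_ok (LExB y f) = (y \<noteq> 0 \<and> bound_ok f)"
| "bound_ok (LAllB y f) = (y \<noteq> 0 \<and> bound_ok f)"
| "bound_ok _ = True"

definition local_fm :: "'p set \<Rightarrow> 'p lfm \<Rightarrow> bool" where
  "local_fm L f \<longleftrightarrow> fv f \<subseteq> {0} \<and> bound_ok f \<and> preds f \<subseteq> L"

fun leval :: "('v, 'p) interp \<Rightarrow> nat \<Rightarrow> 'p lfm \<Rightarrow> (nat \<Rightarrow> 'v) \<Rightarrow> bool" where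
  "leval H r LTrue a = True"
| "leval H r (LEq i j) a = (a i = a j)"
| "leval H r (LAdj i j) a = adj H (a i) (a j)"
| "leval H r (LPred P i) a = (a i \<in> un H P)"
| "leval H r (LNot f) a = (\<not> leval H r f a)"
| "leval H r (LAnd f g) a = (leval H r f a \<and> leval H r g a)"
| "leval H r (LOr f g) a = (leval H r f a \<or> leval H r g a)"
| "leval H r (LExB y f) a =
     (\<exists>w\<in>verts H. dist_le H r (a 0) w \<and> leval H r f (a(y := w)))"
| "leval H r (LAllB y f) a =
     (\<forall>w\<in>verts H. dist_le H r (a 0) w \<longrightarrow> leval H r f (a(y := w)))"

definition holds_at :: "('v, 'p) interp \<Rightarrow> nat \<Rightarrow> 'p lfm \<Rightarrow> 'v \<Rightarrow> bool" where
  "holds_at H r f v = leval H r f (\<lambda>_. v)"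

datatype 'p basic = BasicEx nat nat "'p lfm" | BasicAll nat nat "'p lfm"

fun spread :: "'p basic \<Rightarrow> nat" where
  "spread (BasicEx m r f) = m" | "spread (BasicAll m r f) = m"
fun brange :: "'p basic \<Rightarrow> nat" where
  "brange (BasicEx m r f) = r" | "brange (BasicAll m r f) = r"
fun core :: "'p basic \<Rightarrow> 'p lfm" where
  "core (BasicEx m r f) = f" | "core (BasicAll m r f) = f"

definition basic_over :: "'p set \<Rightarrow> 'p basic \<Rightarrow> bool" where
  "basic_over L \<phi> \<longleftrightarrow> local_fm L (core \<phi>)"

definition scattered :: "('v, 'p) interp \<Rightarrow> nat \<Rightarrow> 'v list \<Rightarrow> bool" where
  "scattered H r xs \<longleftrightarrow>
     (\<forall>i j. i < j \<and> j < length xs \<longrightarrow> \<not> dist_le H (2 * r) (xs ! i) (xs ! j))"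

fun sat :: "('v, 'p) interp \<Rightarrow> 'p basic \<Rightarrow> bool" where
  "sat H (BasicEx m r f) =
     (\<exists>xs. length xs = m \<and> set xs \<subseteq> verts H \<and> scattered H r xs \<and>
           (\<forall>i<m. holds_at H r f (xs ! i)))"
| "sat H (BasicAll m r f) =
     (\<forall>xs. length xs = Suc m \<and> set xs \<subseteq> verts H \<and> scattered H r xs \<longrightarrow>
           (\<exists>i<Suc m. holds_at H r f (xs ! i)))"

fun sat_variant :: "('v, 'p) interp \<Rightarrow> 'p \<Rightarrow> 'p \<Rightarrow> nat \<Rightarrow> 'p basic \<Rightarrow> bool" where
  "sat_variant H C M k (BasicEx m r f) =
     (\<exists>xs. length xs = k \<and> set xs \<subseteq> verts H \<and> scattered H r xs \<and>
           (\<forall>i<k. xs ! i \<in> un H C \<and> holds_at H r f (xs ! i)))"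
| "sat_variant H C M k (BasicAll m r f) =
     (\<forall>xs. length xs = Suc k \<and> set xs \<subseteq> verts H \<and>
           (\<forall>i<Suc k. xs ! i \<in> un H M) \<and> scattered H r xs \<longrightarrow>
           (\<exists>i<Suc k. holds_at H r f (xs ! i)))"

definition cover :: "nat \<Rightarrow> nat \<Rightarrow> int \<Rightarrow> int set set" where
  "cover l r n = {{i .. i + int l - 1} | i. i mod (int l - 2 * int r) = n mod (int l - 2 * int r)}"

definition covers :: "nat \<Rightarrow> nat \<Rightarrow> int set set set" where
  "covers l r = range (cover l r)"

definition mid :: "nat \<Rightarrow> int set \<Rightarrow> int set" where
  "mid d I = {Min I + int d .. Max I - int d}"

definition plan :: "int set set \<Rightarrow> (int set \<Rightarrow> nat) \<Rightarrow> nat \<Rightarrow> bool" where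
  "plan R p m \<longleftrightarrow> finite {I \<in> R. p I \<noteq> 0} \<and> (\<Sum>I\<in>{I \<in> R. p I \<noteq> 0}. p I) = m"

end

theory Submission
  imports Defs
begin

text \<open>
  Witness the sentence by a set \<open>X\<close> of at most \<open>m\<close> vertices: for a basic existential sentence
  the \<open>m\<close> scattered vertices satisfying the core \<open>\<psi>\<close>, for a basic universal one a scattered set
  of vertices violating \<open>\<psi>\<close> of maximum size, which has at most \<open>m\<close> elements since the sentence
  holds. The middles \<open>M\<^sub>r(I)\<close> of the intervals of a cover partition the layers, so counting the
  points of \<open>X\<close> in each middle gives a plan (in the universal case the surplus \<open>m - |X|\<close> is put
  on an arbitrary interval). This plan works whenever every point of \<open>X\<close> lies in some
  \<open>M\<^sub>3\<^sub>r(I)\<close>: the layering keeps the balls of radius \<open>r\<close> around the relevant vertices, and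
  the walks of length \<open>2r\<close> between them, inside the window \<open>G[\<lambda>\<inverse>(I)]\<close>, so \<open>\<psi>\<close> and
  scatteredness transfer; in the universal case more than \<open>p(I)\<close> scattered violators in
  \<open>M\<^sub>r(I)\<close> could replace the points of \<open>X\<close> there, contradicting the maximality of \<open>X\<close>.
  A single layer misses every \<open>M\<^sub>3\<^sub>r(I)\<close> in only \<open>4r\<close> of the \<open>\<ell> - 2r\<close> covers, so at most
  \<open>4rm \<le> 6rm\<close> covers fail; of the hypothesis on \<open>\<ell>\<close> only \<open>\<ell> > 2r\<close> is needed.
\<close>

section \<open>Covers of the integers\<close>

lemma mid_interval:
  assumes "i \<le> j"
  shows "mid d {i..j} = {i + int d .. j - int d}"
proof -
  have "Min {i..j} = i" "Max {i..j} = j"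
    using assms by (auto intro: Min_eqI Max_eqI)
  then show ?thesis by (simp add: mid_def)
qed

lemma mid_shift:
  assumes "s \<in> mid (d + e) I" and "\<bar>t - s\<bar> \<le> int e"
  shows "t \<in> mid d I"
  using assms by (auto simp: mid_def)

lemma mid_antimono: "d \<le> e \<Longrightarrow> mid e I \<subseteq> mid d I"
  by (auto simp: mid_def)

lemma cover_memE:
  assumes "I \<in> cover l r n"
  obtains i where "I = {i .. i + int l - 1}" and "i mod (int l - 2 * int r) = n mod (int l - 2 * int r)"
  using assms by (auto simp: cover_def)

lemma cover_cong:
  "n mod (int l - 2 * int r) = n' mod (int l - 2 * int r) \<Longrightarrow> cover l r n = cover l r n'"
  by (simp add: cover_def)

lemma interval_in_cover: "{n .. n + int l - 1} \<in> cover l r n"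
  by (auto simp: cover_def)

lemma ball_subset_of_mid:
  assumes "R \<in> covers l r" and "I \<in> R" and "0 < int l - 2 * int r" and "t \<in> mid d I"
  shows "{t - int d .. t + int d} \<subseteq> I"
proof -
  obtain n where "R = cover l r n" using assms(1) by (auto simp: covers_def)
  then obtain i where I: "I = {i .. i + int l - 1}" using assms(2) by (auto elim: cover_memE)
  show ?thesis using assms(3,4) by (auto simp: I mid_interval)
qed

text \<open>The middles \<open>M\<^sub>r(I)\<close> of the intervals of an \<open>(\<ell>,r)\<close>-cover are translates of
  \<open>{0..<\<ell>-2r}\<close> by multiples of \<open>\<ell>-2r\<close>, so they partition the integers.\<close>
lemma mid_cover_unique:
  assumes q: "0 < int l - 2 * int r"
    and "R \<in> covers l r" "I \<in> R" "J \<in> R" "t \<in> mid r I" "t \<in> mid r J"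
  shows "I = J"
proof -
  obtain n where n: "R = cover l r n" using assms(2) by (auto simp: covers_def)
  obtain i where i: "I = {i .. i + int l - 1}" "i mod (int l - 2 * int r) = n mod (int l - 2 * int r)"
    using assms(3) unfolding n by (rule cover_memE)
  obtain j where j: "J = {j .. j + int l - 1}" "j mod (int l - 2 * int r) = n mod (int l - 2 * int r)"
    using assms(4) unfolding n by (rule cover_memE)
  have "\<bar>i - j\<bar> < int l - 2 * int r"
    using assms(5,6) q by (auto simp: i(1) j(1) mid_interval)
  moreover have "(int l - 2 * int r) dvd (i - j)"
    using i(2) j(2) by (metis mod_eq_dvd_iff)
  ultimately have "i = j"
    using dvd_imp_le_int[of "i - j" "int l - 2 * int r"] by fastforce
  then show ?thesis by (simp add: i(1) j(1))
qed

lemma mid_cover_near: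
  assumes q: "0 < int l - 2 * int r"
    and "R \<in> covers l r" "I \<in> R" "K \<in> R" "s \<in> mid r I" "t \<in> mid (3 * r) K"
    and "\<bar>s - t\<bar> \<le> 2 * int r"
  shows "t \<in> mid r I"
proof -
  have "s \<in> mid r K" using mid_shift[of t r "2 * r" K s] assms(6,7) by simp
  then have "K = I" using mid_cover_unique[OF q assms(2,4,3)] assms(5) by blast
  then show ?thesis using assms(6) mid_antimono[of r "3 * r"] by auto
qed

lemma finite_covers:
  assumes "0 < int l - 2 * int r"
  shows "finite (covers l r)"
proof -
  have "covers l r \<subseteq> cover l r ` {0 ..< int l - 2 * int r}"
  proof
    fix R assume "R \<in> covers l r"
    then obtain n where n: "R = cover l r n" by (auto simp: covers_def)
    then have "R = cover l r (n mod (int l - 2 * int r))" by (simp only:) (rule cover_cong, simp)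
    moreover have "n mod (int l - 2 * int r) \<in> {0 ..< int l - 2 * int r}"
      using assms by simp
    ultimately show "R \<in> cover l r ` {0 ..< int l - 2 * int r}" by (rule image_eqI)
  qed
  then show ?thesis by (rule finite_subset) simp
qed

text \<open>If \<open>R\<close> is the cover of offset \<open>n\<close>, then \<open>t\<close> lies in \<open>M\<^sub>r(I)\<close> for the interval \<open>I\<close> starting
  at \<open>t - r - s\<close>, \<open>s = (t - r - n) mod (\<ell> - 2r)\<close>; it misses \<open>M\<^sub>r\<^sub>+\<^sub>k(I)\<close> only for the \<open>2k\<close>
  offsets \<open>s\<close> closest to the ends of that middle.\<close>
lemma cover_shift_if_not_deep:
  assumes q: "0 < int l - 2 * int r" and R: "R \<in> covers l r"
    and not_deep: "\<forall>I\<in>R. t \<notin> mid (r + k) I"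
  shows "\<exists>s\<in>{- int k ..< int k}. R = cover l r (t - int r - s)"
proof -
  define q where "q = int l - 2 * int r"
  obtain n where n: "R = cover l r n" using R by (auto simp: covers_def)
  define s where "s = (t - int r - n) mod q"
  have s: "0 \<le> s" "s < q" using q by (simp_all add: s_def q_def)
  have "t - int r - s = n + q * ((t - int r - n) div q)"
    using minus_mod_eq_mult_div[of "t - int r - n" q] by (simp add: s_def)
  then have i: "(t - int r - s) mod q = n mod q" by simp
  then have "{t - int r - s .. t - int r - s + int l - 1} \<in> R"
    by (auto simp: n cover_def q_def)
  then have "t \<notin> mid (r + k) {t - int r - s .. t - int r - s + int l - 1}"
    using not_deep by blast
  then have "s < int k \<or> q - int k \<le> s" using q by (auto simp: mid_interval q_def)
  then show ?thesis
  proof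
    assume "s < int k"
    moreover have "R = cover l r (t - int r - s)"
      using i by (simp add: n q_def cover_def)
    ultimately show ?thesis using s by auto
  next
    assume "q - int k \<le> s"
    have "t - int r - (s - q) = (t - int r - s) + q" by simp
    then have "(t - int r - (s - q)) mod q = n mod q" using i by (simp only: mod_add_self2)
    then have "R = cover l r (t - int r - (s - q))"
      by (simp add: n q_def cover_def)
    moreover have "s - q \<in> {- int k ..< int k}" using s \<open>q - int k \<le> s\<close> by simp
    ultimately show ?thesis by blast
  qed
qed

lemma card_covers_not_deep_at:
  assumes "0 < int l - 2 * int r"
  shows "card {R \<in> covers l r. \<forall>I\<in>R. t \<notin> mid (r + k) I} \<le> 2 * k"
proof -
  have "{R \<in> covers l r. \<forall>I\<in>R. t \<notin> mid (r + k) I}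
      \<subseteq> (\<lambda>s. cover l r (t - int r - s)) ` {- int k ..< int k}"
    using cover_shift_if_not_deep[OF assms] by blast
  then have "card {R \<in> covers l r. \<forall>I\<in>R. t \<notin> mid (r + k) I}
      \<le> card ((\<lambda>s. cover l r (t - int r - s)) ` {- int k ..< int k})"
    by (rule card_mono[rotated]) simp
  also have "\<dots> \<le> card {- int k ..< int k}" by (rule card_image_le) simp
  finally show ?thesis by simp
qed

lemma card_covers_not_deep:
  assumes "0 < int l - 2 * int r" and "finite T"
    and "\<And>R. R \<in> covers l r \<Longrightarrow> \<forall>t\<in>T. \<exists>I\<in>R. t \<in> mid (r + k) I \<Longrightarrow> P R"
  shows "card {R \<in> covers l r. \<not> P R} \<le> 2 * k * card T"
proof -
  have "{R \<in> covers l r. \<not> P R} \<subseteq> (\<Union>t\<in>T. {R \<in> covers l r. \<forall>I\<in>R. t \<notin> mid (r + k) I})"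
  proof
    fix R assume R: "R \<in> {R \<in> covers l r. \<not> P R}"
    then have "\<not> (\<forall>t\<in>T. \<exists>I\<in>R. t \<in> mid (r + k) I)" using assms(3)[of R] by auto
    then obtain t where "t \<in> T" "\<forall>I\<in>R. t \<notin> mid (r + k) I" by auto
    with R show "R \<in> (\<Union>t\<in>T. {R \<in> covers l r. \<forall>I\<in>R. t \<notin> mid (r + k) I})" by auto
  qed
  then have "card {R \<in> covers l r. \<not> P R}
      \<le> card (\<Union>t\<in>T. {R \<in> covers l r. \<forall>I\<in>R. t \<notin> mid (r + k) I})"
    by (rule card_mono[rotated]) (use finite_covers[OF assms(1)] in \<open>simp add: assms(2)\<close>)
  also have "\<dots> \<le> (\<Sum>t\<in>T. card {R \<in> covers l r. \<forall>I\<in>R. t \<notin> mid (r + k) I})"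
    by (rule card_UN_le[OF assms(2)])
  also have "\<dots> \<le> (\<Sum>t\<in>T. 2 * k)"
    by (rule sum_mono) (rule card_covers_not_deep_at[OF assms(1)])
  also have "\<dots> = 2 * k * card T" by simp
  finally show ?thesis .
qed

section \<open>Walks in layered graphs and in their windows\<close>

lemma dist_le_refl: "u \<in> verts H \<Longrightarrow> dist_le H k u u"
  unfolding dist_le_def
  by (rule exI[of _ "replicate (Suc k) u"]) (auto simp del: replicate.simps)

lemma dist_le_sym:
  assumes sym: "\<And>u v. adj H u v \<Longrightarrow> adj H v u" and "dist_le H k u v"
  shows "dist_le H k v u"
proof -
  obtain zs where zs: "length zs = Suc k" "set zs \<subseteq> verts H" "zs ! 0 = u" "zs ! k = v"
    and step: "\<forall>i<k. zs ! i = zs ! Suc i \<or> adj H (zs ! i) (zs ! Suc i)"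
    using assms(2) unfolding dist_le_def by blast
  have "rev zs ! i = rev zs ! Suc i \<or> adj H (rev zs ! i) (rev zs ! Suc i)" if "i < k" for i
  proof -
    have "rev zs ! i = zs ! Suc (k - Suc i)" "rev zs ! Suc i = zs ! (k - Suc i)"
      using zs(1) that by (simp_all add: rev_nth Suc_diff_Suc)
    moreover have "zs ! (k - Suc i) = zs ! Suc (k - Suc i) \<or>
        adj H (zs ! (k - Suc i)) (zs ! Suc (k - Suc i))"
      using step that by simp
    ultimately show ?thesis using sym by auto
  qed
  moreover have "rev zs ! 0 = v" "rev zs ! k = u"
    using zs by (simp_all add: rev_nth)
  ultimately show ?thesis
    unfolding dist_le_def using zs(1,2) by (intro exI[of _ "rev zs"]) auto
qed

lemma walk_layer_bound:
  assumes lay: "layering G lam"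
    and walk: "\<forall>i<k. zs ! i = zs ! Suc i \<or> adj G (zs ! i) (zs ! Suc i)"
  shows "j + d \<le> k \<Longrightarrow> \<bar>lam (zs ! (j + d)) - lam (zs ! j)\<bar> \<le> int d"
proof (induction d)
  case (Suc d)
  have "\<bar>lam (zs ! Suc (j + d)) - lam (zs ! (j + d))\<bar> \<le> 1"
    using walk lay Suc.prems unfolding layering_def
    by (metis abs_minus_commute add_Suc_right order.refl Suc_le_lessD diff_self abs_zero zero_le_one)
  then show ?case using Suc by simp
qed simp

lemma dist_le_layer_bound:
  assumes "layering G lam" and "dist_le G k u v"
  shows "\<bar>lam u - lam v\<bar> \<le> int k"
proof -
  obtain zs where "zs ! 0 = u" "zs ! k = v"
    and walk: "\<forall>i<k. zs ! i = zs ! Suc i \<or> adj G (zs ! i) (zs ! Suc i)"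
    using assms(2) unfolding dist_le_def by blast
  then show ?thesis
    using walk_layer_bound[OF assms(1) walk, of 0 k] by (simp add: abs_minus_commute)
qed

lemma verts_expand_restrict [simp]: "verts (expand (restrict G S) C A M B) = verts G \<inter> S"
  by (simp add: expand_def restrict_def)

lemma adj_expand_restrict [simp]:
  "adj (expand (restrict G S) C A M B) u v \<longleftrightarrow> adj G u v \<and> u \<in> S \<and> v \<in> S"
  by (simp add: expand_def restrict_def)

lemma un_expand_restrict:
  "un (expand (restrict G S) C A M B) P =
     (if P = M then B else if P = C then A else un G P \<inter> S)"
  by (simp add: expand_def restrict_def)

lemma dist_le_expand_restrictD:
  assumes "dist_le (expand (restrict G S) C A M B) k u v"
  shows "dist_le G k u v"
  using assms unfolding dist_le_def by auto

text \<open>Along a walk of length \<open>k \<le> k\<^sub>1 + k\<^sub>2\<close> every vertex is within \<open>k\<^sub>1\<close> steps of \<open>u\<close> or within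
  \<open>k\<^sub>2\<close> steps of \<open>v\<close>, so its layer is in one of the two balls.\<close>
lemma dist_le_expand_restrictI:
  assumes lay: "layering G lam" and "dist_le G k u v" and "k \<le> k\<^sub>1 + k\<^sub>2"
    and layers: "{lam u - int k\<^sub>1 .. lam u + int k\<^sub>1} \<union> {lam v - int k\<^sub>2 .. lam v + int k\<^sub>2} \<subseteq> I"
  shows "dist_le (expand (restrict G (lam -` I)) C A M B) k u v"
proof -
  obtain zs where zs: "length zs = Suc k" "set zs \<subseteq> verts G" "zs ! 0 = u" "zs ! k = v"
    and walk: "\<forall>i<k. zs ! i = zs ! Suc i \<or> adj G (zs ! i) (zs ! Suc i)"
    using assms(2) unfolding dist_le_def by blast
  have "lam (zs ! j) \<in> I" if "j \<le> k" for j
  proof (cases "j \<le> k\<^sub>1")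
    case True
    then have "\<bar>lam (zs ! j) - lam u\<bar> \<le> int k\<^sub>1"
      using walk_layer_bound[OF lay walk, of 0 j] that zs(3) by simp
    then show ?thesis using layers by (auto simp: abs_le_iff)
  next
    case False
    then have "\<bar>lam (zs ! j) - lam v\<bar> \<le> int k\<^sub>2"
      using walk_layer_bound[OF lay walk, of j "k - j"] that zs(4) \<open>k \<le> k\<^sub>1 + k\<^sub>2\<close>
      by (simp add: abs_minus_commute)
    then show ?thesis using layers by (auto simp: abs_le_iff)
  qed
  then show ?thesis
    unfolding dist_le_def using zs walk by (intro exI[of _ zs]) (auto simp: in_set_conv_nth)
qed

lemma leval_expand_restrict:
  assumes ball: "\<And>w. dist_le G k v w \<Longrightarrow> w \<in> S \<and> dist_le (expand (restrict G S) C A M B) k v w"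
  shows "bound_ok f \<Longrightarrow> C \<notin> preds f \<Longrightarrow> M \<notin> preds f \<Longrightarrow> a 0 = v \<Longrightarrow> range a \<subseteq> S \<Longrightarrow>
    leval (expand (restrict G S) C A M B) k f a = leval G k f a"
proof (induction f arbitrary: a)
  case (LPred P i)
  then show ?case by (auto simp: un_expand_restrict)
next
  case (LExB y f)
  have "w \<in> verts (expand (restrict G S) C A M B) \<and> dist_le (expand (restrict G S) C A M B) k v w \<and>
      leval (expand (restrict G S) C A M B) k f (a(y := w)) \<longleftrightarrow>
    w \<in> verts G \<and> dist_le G k v w \<and> leval G k f (a(y := w))" for w
  proof (cases "w \<in> S")
    case True
    then have "leval (expand (restrict G S) C A M B) k f (a(y := w)) = leval G k f (a(y := w))"
      by (intro LExB.IH) (use LExB.prems in auto)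
    then show ?thesis using True ball by (auto dest: dist_le_expand_restrictD)
  qed (use ball in auto)
  then show ?case by (simp only: leval.simps Bex_def LExB.prems(4))
next
  case (LAllB y f)
  have "(w \<in> verts (expand (restrict G S) C A M B) \<longrightarrow> dist_le (expand (restrict G S) C A M B) k v w \<longrightarrow>
      leval (expand (restrict G S) C A M B) k f (a(y := w))) \<longleftrightarrow>
    (w \<in> verts G \<longrightarrow> dist_le G k v w \<longrightarrow> leval G k f (a(y := w)))" for w
  proof (cases "w \<in> S")
    case True
    then have "leval (expand (restrict G S) C A M B) k f (a(y := w)) = leval G k f (a(y := w))"
      by (intro LAllB.IH) (use LAllB.prems in auto)
    then show ?thesis using True ball by (auto dest: dist_le_expand_restrictD)
  qed (use ball in auto)
  then show ?case by (simp only: leval.simps Ball_def LAllB.prems(4))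
qed auto

lemma holds_at_expand_restrict:
  assumes lay: "layering G lam" and "bound_ok f" "C \<notin> preds f" "M \<notin> preds f"
    and layers: "{lam v - int k .. lam v + int k} \<subseteq> I"
  shows "holds_at (expand (restrict G (lam -` I)) C A M B) k f v = holds_at G k f v"
  unfolding holds_at_def
proof (rule leval_expand_restrict[OF _ assms(2-4)])
  fix w assume w: "dist_le G k v w"
  have "\<bar>lam w - lam v\<bar> \<le> int k"
    using dist_le_layer_bound[OF lay w] by (simp add: abs_minus_commute)
  then have "lam w \<in> I" using layers by (auto simp: abs_le_iff)
  moreover have "dist_le (expand (restrict G (lam -` I)) C A M B) k v w"
    by (rule dist_le_expand_restrictI[OF lay w, of k 0]) (use layers \<open>lam w \<in> I\<close> in auto)
  ultimately show "w \<in> lam -` I \<and> dist_le (expand (restrict G (lam -` I)) C A M B) k v w"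
    by simp
qed (use layers in auto)

definition scattered_set :: "('v, 'p) interp \<Rightarrow> nat \<Rightarrow> 'v set \<Rightarrow> bool" where
  "scattered_set H k S \<longleftrightarrow> (\<forall>u\<in>S. \<forall>v\<in>S. u \<noteq> v \<longrightarrow> \<not> dist_le H (2 * k) u v)"

lemma scattered_if_scattered_set:
  assumes "distinct xs" and "scattered_set H k (set xs)"
  shows "scattered H k xs"
  using assms unfolding scattered_def scattered_set_def
  by (metis nth_eq_iff_index_eq nth_mem order.strict_trans less_not_refl)

lemma scattered_set_if_scattered:
  assumes "set xs \<subseteq> verts H" and sym: "\<And>u v. adj H u v \<Longrightarrow> adj H v u" and "scattered H k xs"
  shows "distinct xs" and "scattered_set H k (set xs)"
proof -
  have far: "\<not> dist_le H (2 * k) (xs ! i) (xs ! j)"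
    if "i < length xs" "j < length xs" "i \<noteq> j" for i j
  proof (cases "i < j")
    case True
    then show ?thesis using assms(3) that unfolding scattered_def by blast
  next
    case False
    then show ?thesis
      using assms(3) that dist_le_sym[OF sym] unfolding scattered_def by (meson linorder_neqE_nat)
  qed
  show "distinct xs"
    unfolding distinct_conv_nth
    using far dist_le_refl assms(1) by (metis nth_mem subsetD)
  then show "scattered_set H k (set xs)"
    unfolding scattered_set_def using far by (metis in_set_conv_nth)
qed

lemma scattered_set_subset: "scattered_set H k S \<Longrightarrow> T \<subseteq> S \<Longrightarrow> scattered_set H k T"
  unfolding scattered_set_def by blast

lemma scattered_set_Un:
  assumes sym: "\<And>u v. adj H u v \<Longrightarrow> adj H v u"
    and "scattered_set H k S" "scattered_set H k T"
    and far: "\<And>s t. s \<in> S \<Longrightarrow> t \<in> T \<Longrightarrow> \<not> dist_le H (2 * k) s t"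
  shows "scattered_set H k (S \<union> T)"
  unfolding scattered_set_def
proof (intro ballI impI)
  fix u v assume uv: "u \<in> S \<union> T" "v \<in> S \<union> T" "u \<noteq> v"
  have "\<not> dist_le H (2 * k) v u" if "u \<in> S" "v \<in> T" for u v
    using far that dist_le_sym[OF sym] by blast
  then show "\<not> dist_le H (2 * k) u v"
    using uv assms(2,3) far unfolding scattered_set_def by blast
qed

lemma scattered_set_expand_restrictD:
  assumes lay: "layering G lam" and q: "0 < int l - 2 * int r"
    and "R \<in> covers l r" "I \<in> R" and "r' \<le> r" and mid: "\<forall>y\<in>Y. lam y \<in> mid r I"
    and sc: "scattered_set (expand (restrict G (lam -` I)) C A M B) r' Y"
  shows "scattered_set G r' Y"
  unfolding scattered_set_def
proof (intro ballI impI notI)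
  fix u v assume uv: "u \<in> Y" "v \<in> Y" "u \<noteq> v" and d: "dist_le G (2 * r') u v"
  have "{lam y - int r' .. lam y + int r'} \<subseteq> I" if "y \<in> Y" for y
    using ball_subset_of_mid[OF assms(3,4) q] mid mid_antimono[OF \<open>r' \<le> r\<close>] that by blast
  then have "dist_le (expand (restrict G (lam -` I)) C A M B) (2 * r') u v"
    using uv by (intro dist_le_expand_restrictI[OF lay d]) auto
  then show False using sc uv unfolding scattered_set_def by blast
qed

lemma planI:
  assumes "finite F" and "F \<subseteq> R" and "\<And>I. I \<in> R - F \<Longrightarrow> p I = 0" and "sum p F = m"
  shows "plan R p m"
proof -
  have supp: "{I \<in> R. p I \<noteq> 0} \<subseteq> F"
  proof
    fix I assume "I \<in> {I \<in> R. p I \<noteq> 0}"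
    then show "I \<in> F" using assms(3)[of I] by auto
  qed
  have "sum p F = sum p {I \<in> R. p I \<noteq> 0}"
    by (rule sum.mono_neutral_right) (use assms(1,2) supp in auto)
  then show ?thesis
    unfolding plan_def using assms(1,4) supp finite_subset by metis
qed

lemma plan_add:
  assumes "plan R p m" and "I\<^sub>0 \<in> R"
  shows "plan R (p(I\<^sub>0 := p I\<^sub>0 + j)) (m + j)"
proof (rule planI)
  define F where "F = insert I\<^sub>0 {I \<in> R. p I \<noteq> 0}"
  show "finite F" "F \<subseteq> R" using assms unfolding F_def plan_def by auto
  show "(p(I\<^sub>0 := p I\<^sub>0 + j)) I = 0" if "I \<in> R - F" for I
    using that by (simp add: F_def)
  have "sum p F = m"
    using assms unfolding F_def plan_def by (cases "p I\<^sub>0 = 0") (simp_all add: insert_absorb)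
  then show "sum (p(I\<^sub>0 := p I\<^sub>0 + j)) F = m + j"
    using \<open>finite F\<close> by (simp add: F_def sum.insert_remove sum.remove)
qed

lemma plan_card_mid:
  assumes q: "0 < int l - 2 * int r" and R: "R \<in> covers l r" and "finite X" and "r \<le> d"
    and deep: "\<forall>x\<in>X. \<exists>I\<in>R. f x \<in> mid d I"
  shows "plan R (\<lambda>I. card {x \<in> X. f x \<in> mid d I}) (card X)"
proof -
  obtain home where home: "\<forall>x\<in>X. home x \<in> R \<and> f x \<in> mid d (home x)"
    using deep by metis
  have unique: "I = home x" if "x \<in> X" "I \<in> R" "f x \<in> mid d I" for x I
    using mid_cover_unique[OF q R] home that mid_antimono[OF \<open>r \<le> d\<close>] by blast
  show ?thesis
  proof (rule planI)
    show "finite (home ` X)" "home ` X \<subseteq> R" using \<open>finite X\<close> home by auto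
    show "card {x \<in> X. f x \<in> mid d I} = 0" if "I \<in> R - home ` X" for I
      using that unique \<open>finite X\<close> by auto
    have "X = (\<Union>I\<in>home ` X. {x \<in> X. f x \<in> mid d I})"
      using home by blast
    moreover have "{x \<in> X. f x \<in> mid d I} \<inter> {x \<in> X. f x \<in> mid d J} = {}"
      if "I \<in> home ` X" "J \<in> home ` X" "I \<noteq> J" for I J
      using that unique home by blast
    then have "card (\<Union>I\<in>home ` X. {x \<in> X. f x \<in> mid d I})
        = (\<Sum>I\<in>home ` X. card {x \<in> X. f x \<in> mid d I})"
      by (intro card_UN_disjoint) (use \<open>finite X\<close> in auto)
    ultimately show "(\<Sum>I\<in>home ` X. card {x \<in> X. f x \<in> mid d I}) = card X" by simp
  qed
qed

abbreviation layer_window ::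
    "('v, 'p) interp \<Rightarrow> ('v \<Rightarrow> int) \<Rightarrow> 'p \<Rightarrow> 'p \<Rightarrow> nat \<Rightarrow> int set \<Rightarrow> ('v, 'p) interp" where
  "layer_window G lam C M r I \<equiv>
     expand (restrict G (lam -` I)) C (lam -` mid (2 * r) I) M (lam -` mid r I)"

definition has_plan ::
    "('v, 'p) interp \<Rightarrow> ('v \<Rightarrow> int) \<Rightarrow> 'p \<Rightarrow> 'p \<Rightarrow> nat \<Rightarrow> int set set \<Rightarrow> 'p basic \<Rightarrow> bool" where
  "has_plan G lam C M r R \<phi> \<longleftrightarrow>
     (\<exists>p. plan R p (spread \<phi>) \<and> (\<forall>I\<in>R. sat_variant (layer_window G lam C M r I) C M (p I) \<phi>))"

section \<open>Basic existential sentences\<close>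

lemma has_plan_BasicEx:
  assumes "C \<noteq> M" "C \<notin> preds f" "M \<notin> preds f" "bound_ok f"
    and lay: "layering G lam" and "r' \<le> r" and q: "0 < int l - 2 * int r" and R: "R \<in> covers l r"
    and xs: "set xs \<subseteq> verts G" "distinct xs" "scattered_set G r' (set xs)"
      "\<forall>x\<in>set xs. holds_at G r' f x"
    and deep: "\<forall>x\<in>set xs. \<exists>I\<in>R. lam x \<in> mid (2 * r) I"
  shows "has_plan G lam C M r R (BasicEx (length xs) r' f)"
proof -
  define p where "p = (\<lambda>I. card {x \<in> set xs. lam x \<in> mid (2 * r) I})"
  have "plan R p (length xs)"
    using plan_card_mid[OF q R _ _ deep] distinct_card[OF xs(2)] by (simp add: p_def)
  moreover have "sat_variant (layer_window G lam C M r I) C M (p I) (BasicEx (length xs) r' f)"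
    if I: "I \<in> R" for I
  proof -
    define ys where "ys = filter (\<lambda>x. lam x \<in> mid (2 * r) I) xs"
    have set_ys: "set ys = {x \<in> set xs. lam x \<in> mid (2 * r) I}" by (auto simp: ys_def)
    have "distinct ys" using xs(2) by (simp add: ys_def)
    then have len: "length ys = p I" using set_ys by (simp add: p_def distinct_card[symmetric])
    have ball: "{lam y - int r' .. lam y + int r'} \<subseteq> I" if "y \<in> set ys" for y
    proof (rule ball_subset_of_mid[OF R I q])
      show "lam y \<in> mid r' I"
        using that set_ys mid_antimono[of r' "2 * r"] \<open>r' \<le> r\<close> by auto
    qed
    have "set ys \<subseteq> verts (layer_window G lam C M r I)"
      using ball set_ys xs(1) by fastforce
    moreover have "scattered (layer_window G lam C M r I) r' ys"
      using \<open>distinct ys\<close> xs(3) set_ys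
      by (intro scattered_if_scattered_set) (auto simp: scattered_set_def dest: dist_le_expand_restrictD)
    moreover have "ys ! i \<in> un (layer_window G lam C M r I) C \<and>
        holds_at (layer_window G lam C M r I) r' f (ys ! i)" if "i < p I" for i
    proof -
      have y: "ys ! i \<in> set ys" using that len by simp
      then have "holds_at (layer_window G lam C M r I) r' f (ys ! i)"
        using holds_at_expand_restrict[OF lay assms(4,2,3) ball] xs(4) set_ys by auto
      then show ?thesis using y set_ys \<open>C \<noteq> M\<close> by (simp add: un_expand_restrict)
    qed
    ultimately show ?thesis using len by auto
  qed
  ultimately show ?thesis unfolding has_plan_def by auto
qed

lemma plan_witness_BasicEx:
  assumes "C \<noteq> M" "C \<notin> preds f" "M \<notin> preds f" "bound_ok f"
    and sym: "\<And>u v. adj G u v \<Longrightarrow> adj G v u" and lay: "layering G lam" and "r' \<le> r"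
    and q: "0 < int l - 2 * int r" and "sat G (BasicEx m r' f)"
  shows "\<exists>X. finite X \<and> card X \<le> m \<and> (\<forall>R\<in>covers l r.
    (\<forall>x\<in>X. \<exists>I\<in>R. lam x \<in> mid (3 * r) I) \<longrightarrow> has_plan G lam C M r R (BasicEx m r' f))"
proof -
  obtain xs where xs: "length xs = m" "set xs \<subseteq> verts G" "scattered G r' xs"
    "\<forall>i<m. holds_at G r' f (xs ! i)"
    using assms(9) by auto
  have holds: "\<forall>x\<in>set xs. holds_at G r' f x" using xs(1,4) by (auto simp: in_set_conv_nth)
  have "distinct xs" "scattered_set G r' (set xs)"
    using scattered_set_if_scattered[OF xs(2) sym xs(3)] by auto
  have "has_plan G lam C M r R (BasicEx m r' f)"
    if R: "R \<in> covers l r" and deep: "\<forall>x\<in>set xs. \<exists>I\<in>R. lam x \<in> mid (3 * r) I" for R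
  proof -
    have "\<forall>x\<in>set xs. \<exists>I\<in>R. lam x \<in> mid (2 * r) I"
      using deep mid_antimono[of "2 * r" "3 * r"] by force
    then show ?thesis
      using has_plan_BasicEx[OF assms(1-4) lay \<open>r' \<le> r\<close> q R xs(2) \<open>distinct xs\<close>
          \<open>scattered_set G r' (set xs)\<close> holds] xs(1)
      by simp
  qed
  then show ?thesis using card_length[of xs] xs(1) by (intro exI[of _ "set xs"]) auto
qed

section \<open>Basic universal sentences\<close>

definition scattered_violators :: "('v, 'p) interp \<Rightarrow> nat \<Rightarrow> 'p lfm \<Rightarrow> 'v set \<Rightarrow> bool" where
  "scattered_violators G k f Z \<longleftrightarrow>
     Z \<subseteq> verts G \<and> scattered_set G k Z \<and> (\<forall>z\<in>Z. \<not> holds_at G k f z)"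

lemma card_scattered_violators_le:
  assumes "sat G (BasicAll m k f)" and "finite Z" and "scattered_violators G k f Z"
  shows "card Z \<le> m"
proof (rule ccontr)
  assume "\<not> card Z \<le> m"
  then obtain T where T: "T \<subseteq> Z" "card T = Suc m"
    by (meson not_le Suc_leI obtain_subset_with_card_n)
  then obtain ys where ys: "set ys = T" "distinct ys"
    using finite_distinct_list finite_subset[OF _ assms(2)] by metis
  have Z: "Z \<subseteq> verts G" "scattered_set G k Z" "\<forall>z\<in>Z. \<not> holds_at G k f z"
    using assms(3) by (simp_all add: scattered_violators_def)
  have "length ys = Suc m" using ys T(2) distinct_card by metis
  moreover have "set ys \<subseteq> verts G" using ys(1) T(1) Z(1) by auto
  moreover have "scattered G k ys"
    using ys T(1) scattered_set_subset[OF Z(2)] by (intro scattered_if_scattered_set) auto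
  ultimately obtain i where "i < length ys" "holds_at G k f (ys ! i)"
    using assms(1) by auto
  then show False using ys T(1) Z(3) nth_mem by blast
qed

lemma ex_max_scattered_violators:
  assumes "finite (verts G)"
  shows "\<exists>X. is_arg_max card (scattered_violators G k f) X"
proof -
  have "scattered_violators G k f {}" by (simp add: scattered_violators_def scattered_set_def)
  moreover have "card Z < Suc (card (verts G))" if "scattered_violators G k f Z" for Z
    using that assms card_mono by (fastforce simp: scattered_violators_def)
  ultimately show ?thesis
    unfolding is_arg_max_linorder by (blast intro: ex_has_greatest_nat)
qed

text \<open>Exchange argument: the points of \<open>Y\<close> are far from the points of \<open>X\<close> outside \<open>M\<^sub>r(I)\<close>,
  so by maximality of \<open>X\<close> they cannot outnumber the points of \<open>X\<close> inside it.\<close>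
lemma card_scattered_violators_in_mid_le:
  assumes lay: "layering G lam" and sym: "\<And>u v. adj G u v \<Longrightarrow> adj G v u"
    and q: "0 < int l - 2 * int r" and R: "R \<in> covers l r" "I \<in> R" and "r' \<le> r"
    and X: "finite X" "is_arg_max card (scattered_violators G r' f) X"
    and deep: "\<forall>x\<in>X. \<exists>K\<in>R. lam x \<in> mid (3 * r) K"
    and Y: "finite Y" "scattered_violators G r' f Y" "\<forall>y\<in>Y. lam y \<in> mid r I"
  shows "card Y \<le> card {x \<in> X. lam x \<in> mid r I}"
proof -
  define X' where "X' = {x \<in> X. lam x \<notin> mid r I}"
  have far: "\<not> dist_le G (2 * r') y x" if y: "y \<in> Y" and x: "x \<in> X'" for y x
  proof
    assume "dist_le G (2 * r') y x"
    then have "\<bar>lam y - lam x\<bar> \<le> 2 * int r"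
      using dist_le_layer_bound[OF lay] \<open>r' \<le> r\<close> by fastforce
    moreover obtain K where "K \<in> R" "lam x \<in> mid (3 * r) K"
      using deep x by (auto simp: X'_def)
    ultimately have "lam x \<in> mid r I"
      using mid_cover_near[OF q R \<open>K \<in> R\<close>] Y(3) y by blast
    then show False using x by (simp add: X'_def)
  qed
  have X_viol: "scattered_violators G r' f X"
    and max: "\<And>Z. scattered_violators G r' f Z \<Longrightarrow> card Z \<le> card X"
    using X(2) by (simp_all add: is_arg_max_linorder)
  have "scattered_set G r' X'"
    using X_viol scattered_set_subset[of G r' X X'] by (auto simp: scattered_violators_def X'_def)
  then have "scattered_set G r' (Y \<union> X')"
    using Y(2) scattered_set_Un[OF sym _ _ far] by (simp add: scattered_violators_def)
  then have "scattered_violators G r' f (Y \<union> X')"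
    using X_viol Y(2) by (auto simp: scattered_violators_def X'_def)
  then have "card (Y \<union> X') \<le> card X" by (rule max)
  moreover have "card (Y \<union> X') = card Y + card X'"
    using X(1) Y(1,3) by (intro card_Un_disjoint) (auto simp: X'_def)
  moreover have "card ({x \<in> X. lam x \<in> mid r I} \<union> X') = card {x \<in> X. lam x \<in> mid r I} + card X'"
    using X(1) by (intro card_Un_disjoint) (auto simp: X'_def)
  moreover have "{x \<in> X. lam x \<in> mid r I} \<union> X' = X" by (auto simp: X'_def)
  ultimately show ?thesis by simp
qed

lemma sat_variant_BasicAll_layer_window:
  assumes "C \<notin> preds f" "M \<notin> preds f" "bound_ok f"
    and lay: "layering G lam" and sym: "\<And>u v. adj G u v \<Longrightarrow> adj G v u" and "r' \<le> r"
    and q: "0 < int l - 2 * int r" and R: "R \<in> covers l r" "I \<in> R"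
    and X: "finite X" "is_arg_max card (scattered_violators G r' f) X"
    and deep: "\<forall>x\<in>X. \<exists>K\<in>R. lam x \<in> mid (3 * r) K"
    and k: "card {x \<in> X. lam x \<in> mid r I} \<le> k"
  shows "sat_variant (layer_window G lam C M r I) C M k (BasicAll m r' f)"
  unfolding sat_variant.simps
proof (intro allI impI, elim conjE)
  let ?H = "layer_window G lam C M r I"
  fix ys assume len: "length ys = Suc k" and ys: "set ys \<subseteq> verts ?H"
    and M_ys: "\<forall>i<Suc k. ys ! i \<in> un ?H M" and sc: "scattered ?H r' ys"
  have mid: "\<forall>y\<in>set ys. lam y \<in> mid r I"
    using M_ys len by (auto simp: in_set_conv_nth un_expand_restrict)
  have sym_H: "\<And>u v. adj ?H u v \<Longrightarrow> adj ?H v u" using sym by simp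
  have "distinct ys"
    by (rule scattered_set_if_scattered(1)[OF ys sym_H sc])
  have "scattered_set ?H r' (set ys)"
    by (rule scattered_set_if_scattered(2)[OF ys sym_H sc])
  then have sc_G: "scattered_set G r' (set ys)"
    by (rule scattered_set_expand_restrictD[OF lay q R \<open>r' \<le> r\<close> mid])
  have holds: "holds_at ?H r' f y = holds_at G r' f y" if "y \<in> set ys" for y
  proof (rule holds_at_expand_restrict[OF lay assms(3,1,2)])
    show "{lam y - int r' .. lam y + int r'} \<subseteq> I"
      using that mid mid_antimono[OF \<open>r' \<le> r\<close>] by (intro ball_subset_of_mid[OF R q]) auto
  qed
  show "\<exists>i<Suc k. holds_at ?H r' f (ys ! i)"
  proof (rule ccontr)
    assume none: "\<not> ?thesis"
    have "\<forall>y\<in>set ys. \<not> holds_at G r' f y"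
    proof
      fix y assume y: "y \<in> set ys"
      then obtain i where "i < length ys" "ys ! i = y" by (auto simp: in_set_conv_nth)
      then show "\<not> holds_at G r' f y" using none holds[OF y] len by auto
    qed
    then have "scattered_violators G r' f (set ys)"
      using ys sc_G by (auto simp: scattered_violators_def)
    then have "card (set ys) \<le> card {x \<in> X. lam x \<in> mid r I}"
      by (intro card_scattered_violators_in_mid_le[OF lay sym q R \<open>r' \<le> r\<close> X deep]) (simp_all add: mid)
    then show False using distinct_card[OF \<open>distinct ys\<close>] len k by simp
  qed
qed

lemma has_plan_BasicAll:
  assumes "C \<notin> preds f" "M \<notin> preds f" "bound_ok f"
    and lay: "layering G lam" and sym: "\<And>u v. adj G u v \<Longrightarrow> adj G v u" and "r' \<le> r"
    and q: "0 < int l - 2 * int r" and R: "R \<in> covers l r"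
    and X: "finite X" "is_arg_max card (scattered_violators G r' f) X" "card X \<le> m"
    and deep: "\<forall>x\<in>X. \<exists>I\<in>R. lam x \<in> mid (3 * r) I"
  shows "has_plan G lam C M r R (BasicAll m r' f)"
proof -
  define c where "c = (\<lambda>I. card {x \<in> X. lam x \<in> mid r I})"
  obtain n where n: "R = cover l r n" using R by (auto simp: covers_def)
  define I\<^sub>0 where "I\<^sub>0 = {n .. n + int l - 1}"
  have "I\<^sub>0 \<in> R" unfolding n I\<^sub>0_def by (rule interval_in_cover)
  have "\<forall>x\<in>X. \<exists>I\<in>R. lam x \<in> mid r I"
    using deep mid_antimono[of r "3 * r"] by force
  then have "plan R c (card X)"
    unfolding c_def by (rule plan_card_mid[OF q R X(1) order.refl])
  \<comment> \<open>the surplus of the plan is put on an arbitrary interval, where it costs nothing\<close>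
  define p where "p = c(I\<^sub>0 := c I\<^sub>0 + (m - card X))"
  have "plan R p m"
    using plan_add[OF \<open>plan R c (card X)\<close> \<open>I\<^sub>0 \<in> R\<close>, of "m - card X"] X(3) by (simp add: p_def)
  moreover have "sat_variant (layer_window G lam C M r I) C M (p I) (BasicAll m r' f)"
    if "I \<in> R" for I
    by (rule sat_variant_BasicAll_layer_window[OF assms(1-3) lay sym \<open>r' \<le> r\<close> q R that X(1,2) deep])
      (auto simp: c_def p_def)
  ultimately show ?thesis unfolding has_plan_def by auto
qed

lemma plan_witness_BasicAll:
  assumes "C \<notin> preds f" "M \<notin> preds f" "bound_ok f"
    and sym: "\<And>u v. adj G u v \<Longrightarrow> adj G v u" and "finite (verts G)"
    and lay: "layering G lam" and "r' \<le> r"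
    and q: "0 < int l - 2 * int r" and "sat G (BasicAll m r' f)"
  shows "\<exists>X. finite X \<and> card X \<le> m \<and> (\<forall>R\<in>covers l r.
    (\<forall>x\<in>X. \<exists>I\<in>R. lam x \<in> mid (3 * r) I) \<longrightarrow> has_plan G lam C M r R (BasicAll m r' f))"
proof -
  obtain X where X: "is_arg_max card (scattered_violators G r' f) X"
    using ex_max_scattered_violators[OF \<open>finite (verts G)\<close>] by blast
  then have "X \<subseteq> verts G" by (simp add: is_arg_max_def scattered_violators_def)
  then have "finite X" using \<open>finite (verts G)\<close> finite_subset by blast
  moreover have "card X \<le> m"
    using card_scattered_violators_le[OF assms(9) \<open>finite X\<close>] X by (simp add: is_arg_max_def)
  ultimately show ?thesis
    using has_plan_BasicAll[OF assms(1-3) lay sym \<open>r' \<le> r\<close> q _ \<open>finite X\<close> X] by blast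
qed

lemma plan_witness:
  assumes "C \<noteq> M" "C \<notin> preds (core \<phi>)" "M \<notin> preds (core \<phi>)" "bound_ok (core \<phi>)"
    and "is_graph G" "sat G \<phi>" "layering G lam" "brange \<phi> \<le> r" "0 < int l - 2 * int r"
  shows "\<exists>X. finite X \<and> card X \<le> spread \<phi> \<and> (\<forall>R\<in>covers l r.
    (\<forall>x\<in>X. \<exists>I\<in>R. lam x \<in> mid (3 * r) I) \<longrightarrow> has_plan G lam C M r R \<phi>)"
proof -
  have sym: "\<And>u v. adj G u v \<Longrightarrow> adj G v u" and "finite (verts G)"
    using assms(5) unfolding is_graph_def by auto
  show ?thesis
  proof (cases \<phi>)
    case (BasicEx m r' f)
    then show ?thesis
      using plan_witness_BasicEx[OF assms(1) _ _ _ sym assms(7) _ assms(9)] assms(2-4,6,8) by simp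
  next
    case (BasicAll m r' f)
    then show ?thesis
      using plan_witness_BasicAll[OF _ _ _ sym \<open>finite (verts G)\<close> assms(7) _ assms(9)]
        assms(2-4,6,8) by simp
  qed
qed

theorem mainTheorem14:
  fixes L :: "'p set" and C M :: 'p and \<phi> :: "'p basic"
    and G :: "('v, 'p) interp" and lam :: "'v \<Rightarrow> int" and r l :: nat
  assumes "finite L" and "C \<notin> L" and "M \<notin> L" and "C \<noteq> M"
    and "basic_over L \<phi>"
    and "L_interp L G" and "sat G \<phi>" and "layering G lam"
    and "brange \<phi> \<le> r" and "int l > 2 * int r * (3 * int (spread \<phi>) + 1)"
  shows "card {R \<in> covers l r.
            \<not> (\<exists>p. plan R p (spread \<phi>) \<and>
                 (\<forall>I\<in>R. sat_variant
                          (expand (restrict G (lam -` I)) C (lam -` mid (2 * r) I) M (lam -` mid r I))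
                          C M (p I) \<phi>))}
         \<le> 6 * r * spread \<phi>"
proof -
  have core: "C \<notin> preds (core \<phi>)" "M \<notin> preds (core \<phi>)" "bound_ok (core \<phi>)"
    using assms(2,3,5) unfolding basic_over_def local_fm_def by auto
  have "2 * int r * (3 * int (spread \<phi>) + 1) = 6 * int r * int (spread \<phi>) + 2 * int r"
    by (simp add: algebra_simps)
  moreover have "0 \<le> 6 * int r * int (spread \<phi>)" by simp
  ultimately have q: "0 < int l - 2 * int r" using assms(10) by linarith
  obtain X where X: "finite X" "card X \<le> spread \<phi>" and good: "\<forall>R\<in>covers l r.
      (\<forall>x\<in>X. \<exists>I\<in>R. lam x \<in> mid (3 * r) I) \<longrightarrow> has_plan G lam C M r R \<phi>"
    using plan_witness[OF assms(4) core _ assms(7-9) q] assms(6) by (auto simp: L_interp_def)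
  have "card {R \<in> covers l r. \<not> has_plan G lam C M r R \<phi>} \<le> 2 * (2 * r) * card (lam ` X)"
  proof (rule card_covers_not_deep[OF q])
    fix R assume "R \<in> covers l r" and "\<forall>t\<in>lam ` X. \<exists>I\<in>R. t \<in> mid (r + 2 * r) I"
    then show "has_plan G lam C M r R \<phi>" using good by (simp add: numeral_3_eq_3)
  qed (use X in simp)
  also have "\<dots> \<le> 6 * r * spread \<phi>"
    using card_image_le[OF X(1), of lam] X(2) by (simp add: mult_le_mono)
  finally show ?thesis unfolding has_plan_def .
qed

end
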